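(* Let $S$ be a dense subsemigroup of $((0,\infty),+)$ and let $\mathcal{K}=\{A\subseteq S: S\setminus A\text{ is not a } J\text{-set near zero}\}$. Then $\mathcal{K}$ is a filter on $S$, $J_0(S)=\overline{\mathcal{K}}$, and $J_0(S)$ is a compact subsemigroup of $\beta S$.
   Context: "Dense" means dense in the usual topology of $(0,\infty)$. $\beta S$ is the Stone–Čech compactification of the discrete set $S$ (ultrafilters on $S$), with $+$ extended so that $(\beta S,+)$ is a compact right topological semigroup: $A\in p+q$ iff $\{x\in S:-x+A\in q\}\in p$. $O^{+}(S)=\{p\in\beta S: S\cap(0,\epsilon)\in p\text{ for every }\epsilon>0\}$. For a filter $\mathcal{K}$ on $S$, $\overline{\mathcal{K}}=\{p\in\beta S:\mathcal{K}\subseteq p\}$. Let $\tau_0$ be the set of sequences $f:\mathbb{N}\to S$ with $f(n)\to0$. A set $A\subseteq S$ is a $J$-set near zero iff for every finite nonempty $F\subseteq\tau_0$ and every $\delta>0$ there exist $a\in S\cap(0,\delta)$ and a finite nonempty $H\subseteq\mathbb{N}$ such that $a+\sum_{t\in H}f(t)\in A$ for every $f\in F$. $J_0(S)=\{p\in O^{+}(S): \text{every } A\in p \text{ is a } J\text{-set near zero}\}$. *)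

theory Defs
  imports "HOL-Analysis.Analysis"
begin

definition dense_subsemigroup :: "real set \<Rightarrow> bool" where
  "dense_subsemigroup S \<longleftrightarrow>
     S \<subseteq> {0<..} \<and> (\<forall>x\<in>S. \<forall>y\<in>S. x + y \<in> S) \<and>
     (\<forall>x y. 0 < x \<and> x < y \<longrightarrow> (\<exists>s\<in>S. x < s \<and> s < y))"

definition filter_on :: "'a set \<Rightarrow> 'a set set \<Rightarrow> bool" where
  "filter_on S K \<longleftrightarrow>
     K \<subseteq> Pow S \<and> S \<in> K \<and> {} \<notin> K \<and>
     (\<forall>A\<in>K. \<forall>B\<in>K. A \<inter> B \<in> K) \<and>
     (\<forall>A\<in>K. \<forall>B. A \<subseteq> B \<and> B \<subseteq> S \<longrightarrow> B \<in> K)"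

definition ultrafilter_on :: "'a set \<Rightarrow> 'a set set \<Rightarrow> bool" where
  "ultrafilter_on S p \<longleftrightarrow> filter_on S p \<and> (\<forall>A. A \<subseteq> S \<longrightarrow> A \<in> p \<or> S - A \<in> p)"

definition beta :: "'a set \<Rightarrow> 'a set set set" where
  "beta S = {p. ultrafilter_on S p}"

definition beta_topology :: "'a set \<Rightarrow> 'a set set topology" where
  "beta_topology S = topology_generated_by {{p \<in> beta S. A \<in> p} | A. A \<subseteq> S}"

text \<open>Extended addition: A \<in> p + q iff {x \<in> S. -x + A \<in> q} \<in> p,
  where -x + A = {y \<in> S. x + y \<in> A}.\<close>
definition beta_plus :: "'a::plus set \<Rightarrow> 'a set set \<Rightarrow> 'a set set \<Rightarrow> 'a set set" where
  "beta_plus S p q = {A. A \<subseteq> S \<and> {x \<in> S. {y \<in> S. x + y \<in> A} \<in> q} \<in> p}"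

definition Oplus :: "real set \<Rightarrow> real set set set" where
  "Oplus S = {p \<in> beta S. \<forall>\<epsilon>>0. S \<inter> {0<..<\<epsilon>} \<in> p}"

definition tau0 :: "real set \<Rightarrow> (nat \<Rightarrow> real) set" where
  "tau0 S = {f. (\<forall>n. f n \<in> S) \<and> f \<longlonglongrightarrow> 0}"

definition J_set_near_zero :: "real set \<Rightarrow> real set \<Rightarrow> bool" where
  "J_set_near_zero S A \<longleftrightarrow>
     (\<forall>F. finite F \<and> F \<noteq> {} \<and> F \<subseteq> tau0 S \<longrightarrow>
       (\<forall>\<delta>>0. \<exists>a\<in>S \<inter> {0<..<\<delta>}. \<exists>H::nat set. finite H \<and> H \<noteq> {} \<and>
          (\<forall>f\<in>F. a + (\<Sum>t\<in>H. f t) \<in> A)))"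

definition J0 :: "real set \<Rightarrow> real set set set" where
  "J0 S = {p \<in> Oplus S. \<forall>A\<in>p. J_set_near_zero S A}"

definition filter_closure :: "'a set \<Rightarrow> 'a set set \<Rightarrow> 'a set set set" where
  "filter_closure S K = {p \<in> beta S. K \<subseteq> p}"

end

theory Submission
  imports Defs
begin

text \<open>
  \<open>K\<close> consists of the sets whose complement in \<open>S\<close> is not a J-set near zero, so it is a filter
  as soon as J-sets near zero are partition regular: if \<open>C \<union> D\<close> is one, then so is \<open>C\<close> or \<open>D\<close>.
  This follows from the Hales--Jewett theorem, proved here by colour focusing. Index the finitely
  many test sequences by letters, \<open>e 0, \<dots>, e (k - 1)\<close>; every word \<open>w\<close> of length \<open>N\<close> then becomes
  the sequence of block sums \<open>t \<mapsto> \<Sum>i<N. e (w i) (idx t i)\<close>, taken over disjoint blocks of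
  indices on which all test sequences are small. Testing \<open>C \<union> D\<close> on all these sequences and colouring \<open>w\<close> by whether its
  witness lands in \<open>C\<close>, a monochromatic combinatorial line yields one shifted witness that
  works for every test sequence and the same piece.

  A test sequence with arbitrarily small partial sums shows that every J-set near zero meets each
  interval \<open>(0, \<epsilon>)\<close>. Hence an ultrafilter contains \<open>K\<close> iff all its members are J-sets near zero,
  and it then lies in \<open>O\<^sup>+(S)\<close> automatically. So \<open>J\<^sub>0(S)\<close> is the closed set of ultrafilters
  containing \<open>K\<close>: compact, and nonempty because \<open>K\<close> has the finite intersection property. For
  closure under \<open>+\<close>, a set \<open>A \<in> p + q\<close> has \<open>-x + A \<in> q\<close> for some small \<open>x \<in> S\<close>, and shifting a
  witness for the J-set \<open>-x + A\<close> by \<open>x\<close> gives one for \<open>A\<close>.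
\<close>

section \<open>The Hales--Jewett theorem\<close>

text \<open>A word \<open>w\<close> with a nonempty set \<open>V\<close> of active coordinates is a combinatorial line;
  \<open>comb_line w V x\<close> is its point with letter \<open>x\<close> in the active coordinates.\<close>

definition words :: "nat \<Rightarrow> nat \<Rightarrow> (nat \<Rightarrow> nat) set" where
  "words k N = PiE {..<N} (\<lambda>_. {..<k})"

definition comb_line :: "(nat \<Rightarrow> nat) \<Rightarrow> nat set \<Rightarrow> nat \<Rightarrow> nat \<Rightarrow> nat" where
  "comb_line w V x = (\<lambda>i. if i \<in> V then x else w i)"

definition append_word :: "nat \<Rightarrow> nat \<Rightarrow> (nat \<Rightarrow> nat) \<Rightarrow> (nat \<Rightarrow> nat) \<Rightarrow> nat \<Rightarrow> nat" where
  "append_word n m u v = (\<lambda>i. if i < n then u i else if i < n + m then v (i - n) else undefined)"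

definition has_mono_line :: "nat \<Rightarrow> ((nat \<Rightarrow> nat) \<Rightarrow> nat) \<Rightarrow> nat \<Rightarrow> bool" where
  "has_mono_line k c N \<longleftrightarrow> (\<exists>w V. w \<in> words k N \<and> V \<noteq> {} \<and> V \<subseteq> {..<N} \<and>
      (\<forall>x<k. c (comb_line w V x) = c (comb_line w V 0)))"

definition line_to_focus ::
    "nat \<Rightarrow> ((nat \<Rightarrow> nat) \<Rightarrow> nat) \<Rightarrow> nat \<Rightarrow> (nat \<Rightarrow> nat) \<Rightarrow> (nat \<Rightarrow> nat) \<Rightarrow> nat set \<Rightarrow> bool" where
  "line_to_focus k c n f W V \<longleftrightarrow> W \<in> words (Suc k) n \<and> V \<noteq> {} \<and> V \<subseteq> {..<n} \<and>
     (\<forall>x<k. c (comb_line W V x) = c (comb_line W V 0)) \<and> comb_line W V k = f"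

definition focused_lines :: "nat \<Rightarrow> ((nat \<Rightarrow> nat) \<Rightarrow> nat) \<Rightarrow> nat \<Rightarrow> nat \<Rightarrow> bool" where
  "focused_lines k c n s \<longleftrightarrow> (\<exists>f W V. f \<in> words (Suc k) n \<and>
     (\<forall>j<s. line_to_focus k c n f (W j) (V j)) \<and> inj_on (\<lambda>j. c (comb_line (W j) (V j) 0)) {..<s})"

lemma comb_line_in_words:
  "w \<in> words k N \<Longrightarrow> V \<subseteq> {..<N} \<Longrightarrow> x < k \<Longrightarrow> comb_line w V x \<in> words k N"
  unfolding words_def comb_line_def PiE_def Pi_def extensional_def by auto

lemma words_mono: "k \<le> k' \<Longrightarrow> words k N \<subseteq> words k' N"
  unfolding words_def by (intro PiE_mono) auto

lemma finite_words: "finite (words k N)"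
  unfolding words_def by (intro finite_PiE) auto

lemma words_less: "w \<in> words k N \<Longrightarrow> i < N \<Longrightarrow> w i < k"
  unfolding words_def by auto

lemma words_nonempty: "0 < k \<Longrightarrow> words k N \<noteq> {}"
  unfolding words_def by (auto simp: PiE_eq_empty_iff)

lemma append_word_in_words:
  "u \<in> words k n \<Longrightarrow> v \<in> words k m \<Longrightarrow> append_word n m u v \<in> words k (n + m)"
  unfolding words_def append_word_def PiE_def Pi_def extensional_def by auto

lemma comb_line_append_word:
  "A \<subseteq> {..<n} \<Longrightarrow> B \<subseteq> {..<m} \<Longrightarrow>
   comb_line (append_word n m u v) (A \<union> (+) n ` B) x = append_word n m (comb_line u A x) (comb_line v B x)"
  unfolding comb_line_def append_word_def by (rule ext) force

lemma comb_line_empty [simp]: "comb_line u {} x = u"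
  unfolding comb_line_def by simp

lemma has_mono_line_append_word:
  assumes "has_mono_line k (\<lambda>u. c (append_word n m u v)) n" and v: "v \<in> words k m"
  shows "has_mono_line k c (n + m)"
proof -
  obtain w V where w: "w \<in> words k n" and V: "V \<noteq> {}" "V \<subseteq> {..<n}"
    and mono: "\<forall>x<k. c (append_word n m (comb_line w V x) v) = c (append_word n m (comb_line w V 0) v)"
    using assms(1) unfolding has_mono_line_def by blast
  have line: "comb_line (append_word n m w v) V x = append_word n m (comb_line w V x) v" for x
    using comb_line_append_word[OF V(2), of "{}" m w v x] by simp
  show ?thesis
    unfolding has_mono_line_def
  proof (intro exI[of _ "append_word n m w v"] exI[of _ V] conjI)
    show "append_word n m w v \<in> words k (n + m)" by (rule append_word_in_words[OF w v])
    show "V \<subseteq> {..<n + m}" using V(2) by auto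
    show "\<forall>x<k. c (comb_line (append_word n m w v) V x) = c (comb_line (append_word n m w v) V 0)"
      using mono by (simp only: line)
  qed (fact V(1))
qed

lemma has_mono_line_if_focus_colour_used:
  assumes "line_to_focus k c n f W V" and "c (comb_line W V 0) = c f"
  shows "has_mono_line (Suc k) c n"
  using assms less_Suc_eq unfolding line_to_focus_def has_mono_line_def by metis

lemma not_focused_lines_beyond_colours:
  assumes "\<forall>u\<in>words (Suc k) n. c u < r"
  shows "\<not> focused_lines k c n (Suc r)"
proof
  assume "focused_lines k c n (Suc r)"
  then obtain W V where WV: "\<And>j. j < Suc r \<Longrightarrow> W j \<in> words (Suc k) n \<and> V j \<subseteq> {..<n}"
    and inj: "inj_on (\<lambda>j. c (comb_line (W j) (V j) 0)) {..<Suc r}"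
    unfolding focused_lines_def line_to_focus_def by blast
  have "(\<lambda>j. c (comb_line (W j) (V j) 0)) ` {..<Suc r} \<subseteq> {..<r}"
    using assms comb_line_in_words WV by blast
  from card_inj_on_le[OF inj this] show False by simp
qed

lemma line_to_focus_append_suffix:
  assumes W: "W \<in> words (Suc k) n" "A \<subseteq> {..<n}"
    and w': "w' \<in> words k m" "V' \<noteq> {}" "V' \<subseteq> {..<m}"
    and mono: "\<forall>x<k. c (append_word n m (comb_line W A x) (comb_line w' V' 0))
                     = c (append_word n m (comb_line W A 0) (comb_line w' V' 0))"
    and blind: "\<forall>x<k. \<forall>u\<in>words (Suc k) n.
                  c (append_word n m u (comb_line w' V' x)) = c (append_word n m u (comb_line w' V' 0))"
  shows "line_to_focus k c (n + m) (append_word n m (comb_line W A k) (comb_line w' V' k))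
           (append_word n m W w') (A \<union> (+) n ` V')"
proof -
  have line: "comb_line (append_word n m W w') (A \<union> (+) n ` V') x
      = append_word n m (comb_line W A x) (comb_line w' V' x)" for x
    using comb_line_append_word[OF W(2) w'(3)] .
  have "w' \<in> words (Suc k) m" using w'(1) words_mono[of k "Suc k"] by auto
  then have "append_word n m W w' \<in> words (Suc k) (n + m)"
    using append_word_in_words[OF W(1)] by blast
  moreover have "c (comb_line (append_word n m W w') (A \<union> (+) n ` V') x)
      = c (comb_line (append_word n m W w') (A \<union> (+) n ` V') 0)" if "x < k" for x
  proof -
    have "comb_line W A x \<in> words (Suc k) n" using comb_line_in_words[OF W] that by simp
    then show ?thesis
      unfolding line using blind mono that by metis
  qed
  moreover have "A \<union> (+) n ` V' \<subseteq> {..<n + m}" using W(2) w'(3) by auto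
  ultimately show ?thesis
    unfolding line_to_focus_def line using w'(2) by blast
qed

text \<open>Colour each suffix \<open>v\<close> by the colouring \<open>u \<mapsto> c (append_word n m u v)\<close> it induces on
  prefixes; there are finitely many such colours, coded by natural numbers.\<close>
lemma exists_suffix_line:
  fixes r :: nat
  assumes HJ_k: "\<And>R. \<exists>N. \<forall>c. (\<forall>u\<in>words k N. c u < R) \<longrightarrow> has_mono_line k c N"
  obtains m where "\<And>c. \<forall>u\<in>words (Suc k) (n + m). c u < r \<Longrightarrow>
    \<exists>w' V'. w' \<in> words k m \<and> V' \<noteq> {} \<and> V' \<subseteq> {..<m} \<and>
      (\<forall>x<k. \<forall>u\<in>words (Suc k) n.
         c (append_word n m u (comb_line w' V' x)) = c (append_word n m u (comb_line w' V' 0)))"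
proof -
  define Fs where "Fs = PiE (words (Suc k) n) (\<lambda>_. {..<r})"
  have "finite Fs" unfolding Fs_def by (intro finite_PiE finite_words) auto
  then obtain code where code: "bij_betw code Fs {0..<card Fs}"
    using ex_bij_betw_finite_nat by blast
  obtain m where m: "\<And>c. \<forall>u\<in>words k m. c u < card Fs \<Longrightarrow> has_mono_line k c m"
    using HJ_k by blast
  show thesis
  proof (rule that[of m])
    fix c assume c: "\<forall>u\<in>words (Suc k) (n + m). c u < r"
    define \<Phi> where "\<Phi> v = restrict (\<lambda>u. c (append_word n m u v)) (words (Suc k) n)" for v
    have \<Phi>_Fs: "\<Phi> v \<in> Fs" if "v \<in> words k m" for v
    proof -
      have v: "v \<in> words (Suc k) m" using that words_mono[of k "Suc k" m] by auto
      show ?thesis unfolding \<Phi>_def Fs_def using c append_word_in_words[OF _ v] by auto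
    qed
    have "\<forall>v\<in>words k m. code (\<Phi> v) < card Fs"
      using bij_betw_apply[OF code] \<Phi>_Fs by (simp add: atLeast0LessThan)
    from m[OF this] obtain w' V' where w': "w' \<in> words k m" "V' \<noteq> {}" "V' \<subseteq> {..<m}"
      and mono: "\<forall>x<k. code (\<Phi> (comb_line w' V' x)) = code (\<Phi> (comb_line w' V' 0))"
      unfolding has_mono_line_def by blast
    have \<Phi>_eq: "\<Phi> (comb_line w' V' x) = \<Phi> (comb_line w' V' 0)" if "x < k" for x
    proof (rule inj_onD[OF bij_betw_imp_inj_on[OF code]])
      show "code (\<Phi> (comb_line w' V' x)) = code (\<Phi> (comb_line w' V' 0))" using mono that by blast
      show "\<Phi> (comb_line w' V' x) \<in> Fs" "\<Phi> (comb_line w' V' 0) \<in> Fs"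
        using \<Phi>_Fs comb_line_in_words[OF w'(1,3)] that by simp_all
    qed
    have "c (append_word n m u (comb_line w' V' x)) = c (append_word n m u (comb_line w' V' 0))"
      if "x < k" "u \<in> words (Suc k) n" for x u
      using fun_cong[OF \<Phi>_eq[OF that(1)], of u] that(2) unfolding \<Phi>_def by simp
    with w' show "\<exists>w' V'. w' \<in> words k m \<and> V' \<noteq> {} \<and> V' \<subseteq> {..<m} \<and>
      (\<forall>x<k. \<forall>u\<in>words (Suc k) n.
         c (append_word n m u (comb_line w' V' x)) = c (append_word n m u (comb_line w' V' 0)))"
      by blast
  qed
qed

text \<open>Appending the suffix line \<open>comb_line w' V'\<close> to each line to \<open>f\<close>, and adding the line \<open>f\<close>
  followed by the suffix line, gives \<open>s + 1\<close> lines to a new focus; their colours are the old ones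
  together with the new colour \<open>d f\<close>.\<close>
lemma focused_lines_append_suffix:
  assumes f: "f \<in> words (Suc k) n"
    and lines: "\<And>j. j < s \<Longrightarrow> line_to_focus k d n f (W j) (V j)"
    and d: "\<And>u. d u = c (append_word n m u (comb_line w' V' 0))"
    and w': "w' \<in> words k m" "V' \<noteq> {}" "V' \<subseteq> {..<m}"
    and blind: "\<forall>x<k. \<forall>u\<in>words (Suc k) n.
         c (append_word n m u (comb_line w' V' x)) = c (append_word n m u (comb_line w' V' 0))"
    and inj: "inj_on (\<lambda>j. d (comb_line (W j) (V j) 0)) {..<s}"
    and new: "\<not> (\<exists>j<s. d (comb_line (W j) (V j) 0) = d f)"
  shows "focused_lines k c (n + m) (Suc s)"
proof -
  define v where "v = comb_line w' V'"
  have vk: "v k \<in> words (Suc k) m"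
    using comb_line_in_words[OF _ w'(3)] w'(1) words_mono[of k "Suc k" m] unfolding v_def by auto
  define W' where "W' j = (if j < s then W j else f)" for j
  define V'' where "V'' j = (if j < s then V j else {})" for j
  have extend: "line_to_focus k c (n + m) (append_word n m f (v k))
      (append_word n m W0 w') (A \<union> (+) n ` V')"
    if "W0 \<in> words (Suc k) n" "A \<subseteq> {..<n}" "comb_line W0 A k = f"
      and "\<forall>x<k. d (comb_line W0 A x) = d (comb_line W0 A 0)" for W0 A
  proof -
    have "\<forall>x<k. c (append_word n m (comb_line W0 A x) (comb_line w' V' 0))
        = c (append_word n m (comb_line W0 A 0) (comb_line w' V' 0))"
      using that(4) unfolding d .
    from line_to_focus_append_suffix[OF that(1,2) w' this blind]
    show ?thesis unfolding that(3) v_def .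
  qed
  have W'_lt: "W' j = W j" "V'' j = V j" if "j < s" for j
    using that by (simp_all add: W'_def V''_def)
  have W'_s: "W' s = f" "V'' s = {}" by (simp_all add: W'_def V''_def)
  have V''_sub: "V'' j \<subseteq> {..<n}" if "j < Suc s" for j
  proof (cases "j < s")
    case True
    then show ?thesis using lines[OF True] unfolding W'_lt[OF True] line_to_focus_def by blast
  qed (use that W'_s in \<open>simp add: less_Suc_eq\<close>)
  have "line_to_focus k c (n + m) (append_word n m f (v k))
      (append_word n m (W' j) w') (V'' j \<union> (+) n ` V')" if "j < Suc s" for j
  proof (cases "j < s")
    case True
    then show ?thesis
      using extend lines[OF True] unfolding W'_lt[OF True] line_to_focus_def by blast
  next
    case False
    with that have "j = s" by simp
    then show ?thesis using extend[of f "{}"] f by (simp add: W'_s)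
  qed
  moreover have "inj_on (\<lambda>j. c (comb_line (append_word n m (W' j) w') (V'' j \<union> (+) n ` V') 0)) {..<Suc s}"
  proof -
    have "c (comb_line (append_word n m (W' j) w') (V'' j \<union> (+) n ` V') 0)
        = d (comb_line (W' j) (V'' j) 0)" if "j < Suc s" for j
      using comb_line_append_word[OF V''_sub[OF that] w'(3)] unfolding d by simp
    moreover have "inj_on (\<lambda>j. d (comb_line (W' j) (V'' j) 0)) {..<Suc s}"
      using inj new unfolding W'_def V''_def inj_on_def by (auto simp: less_Suc_eq)
    ultimately show ?thesis by (simp add: inj_on_def)
  qed
  ultimately show ?thesis
    unfolding focused_lines_def using append_word_in_words[OF f vk]
    by (intro exI[of _ "append_word n m f (v k)"] exI[of _ "\<lambda>j. append_word n m (W' j) w'"]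
        exI[of _ "\<lambda>j. V'' j \<union> (+) n ` V'"]) blast
qed

lemma colour_focusing:
  fixes r :: nat
  assumes HJ_k: "\<And>R. \<exists>N. \<forall>c. (\<forall>u\<in>words k N. c u < R) \<longrightarrow> has_mono_line k c N"
  shows "\<exists>n. \<forall>c. (\<forall>u\<in>words (Suc k) n. c u < r) \<longrightarrow> has_mono_line (Suc k) c n \<or> focused_lines k c n s"
proof (induction s)
  case 0
  show ?case by (rule exI[of _ 0]) (auto simp: focused_lines_def words_def)
next
  case (Suc s)
  then obtain n where n: "\<And>c. \<forall>u\<in>words (Suc k) n. c u < r \<Longrightarrow>
      has_mono_line (Suc k) c n \<or> focused_lines k c n s"
    by blast
  obtain m where m: "\<And>c. \<forall>u\<in>words (Suc k) (n + m). c u < r \<Longrightarrow>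
    \<exists>w' V'. w' \<in> words k m \<and> V' \<noteq> {} \<and> V' \<subseteq> {..<m} \<and>
      (\<forall>x<k. \<forall>u\<in>words (Suc k) n.
         c (append_word n m u (comb_line w' V' x)) = c (append_word n m u (comb_line w' V' 0)))"
    using exists_suffix_line[OF HJ_k] by blast
  have "has_mono_line (Suc k) c (n + m) \<or> focused_lines k c (n + m) (Suc s)"
    if c: "\<forall>u\<in>words (Suc k) (n + m). c u < r" for c
  proof -
    obtain w' V' where w': "w' \<in> words k m" "V' \<noteq> {}" "V' \<subseteq> {..<m}"
      and blind: "\<forall>x<k. \<forall>u\<in>words (Suc k) n.
         c (append_word n m u (comb_line w' V' x)) = c (append_word n m u (comb_line w' V' 0))"
      using m[OF c] by blast
    define v where "v = comb_line w' V'"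
    define d where "d u = c (append_word n m u (v 0))" for u
    have v0: "v 0 \<in> words (Suc k) m"
      using comb_line_in_words[OF _ w'(3)] w'(1) words_mono[of k "Suc k" m] unfolding v_def by auto
    have "\<forall>u\<in>words (Suc k) n. d u < r"
      using c append_word_in_words[OF _ v0] unfolding d_def by blast
    from n[OF this] show ?thesis
    proof
      assume "has_mono_line (Suc k) d n"
      then show ?thesis using has_mono_line_append_word v0 unfolding d_def by blast
    next
      assume "focused_lines k d n s"
      then obtain f W V where f: "f \<in> words (Suc k) n"
        and lines: "\<And>j. j < s \<Longrightarrow> line_to_focus k d n f (W j) (V j)"
        and inj: "inj_on (\<lambda>j. d (comb_line (W j) (V j) 0)) {..<s}"
        unfolding focused_lines_def by blast
      show ?thesis
      proof (cases "\<exists>j<s. d (comb_line (W j) (V j) 0) = d f")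
        case True
        then have "has_mono_line (Suc k) d n"
          using has_mono_line_if_focus_colour_used lines by blast
        then show ?thesis using has_mono_line_append_word v0 unfolding d_def by blast
      next
        case False
        have "d u = c (append_word n m u (comb_line w' V' 0))" for u by (simp add: d_def v_def)
        from focused_lines_append_suffix[OF f lines this w' blind inj False]
        have "focused_lines k c (n + m) (Suc s)" .
        then show ?thesis ..
      qed
    qed
  qed
  then show ?case by blast
qed

theorem hales_jewett:
  assumes "0 < k"
  shows "\<exists>N. \<forall>c. (\<forall>u\<in>words k N. c u < r) \<longrightarrow> has_mono_line k c N"
  using assms
proof (induction k arbitrary: r rule: nat_induct_non_zero)
  case 1
  have "has_mono_line 1 c 1" for c
    unfolding has_mono_line_def using words_nonempty[of 1 1]
    by (auto intro!: exI[of _ "{0}"])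
  then show ?case by blast
next
  case (Suc k)
  obtain n where n: "\<And>c. \<forall>u\<in>words (Suc k) n. c u < r \<Longrightarrow>
      has_mono_line (Suc k) c n \<or> focused_lines k c n (Suc r)"
    using colour_focusing[OF Suc.IH] by blast
  show ?case using n not_focused_lines_beyond_colours by blast
qed

section \<open>Dense subsemigroups and J-sets near zero\<close>

lemma sum_in_add_closed:
  fixes S :: "'a::comm_monoid_add set"
  assumes add: "\<forall>x\<in>S. \<forall>y\<in>S. x + y \<in> S" and "finite I" "I \<noteq> {}" "\<forall>i\<in>I. b i \<in> S"
  shows "sum b I \<in> S"
  using assms(2-4) by (induction I rule: finite_ne_induct) (simp_all add: add)

lemma add_sum_in_add_closed:
  fixes S :: "'a::comm_monoid_add set"
  assumes add: "\<forall>x\<in>S. \<forall>y\<in>S. x + y \<in> S" and "a \<in> S" "finite I" "\<forall>i\<in>I. b i \<in> S"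
  shows "a + sum b I \<in> S"
proof (cases "I = {}")
  case False
  then show ?thesis using assms sum_in_add_closed[OF add] by blast
qed (use assms in simp)

lemma dense_subsemigroup_pos: "dense_subsemigroup S \<Longrightarrow> x \<in> S \<Longrightarrow> 0 < x"
  unfolding dense_subsemigroup_def by auto

lemma dense_subsemigroup_add_closed: "dense_subsemigroup S \<Longrightarrow> \<forall>x\<in>S. \<forall>y\<in>S. x + y \<in> S"
  unfolding dense_subsemigroup_def by auto

lemma dense_subsemigroup_between:
  "dense_subsemigroup S \<Longrightarrow> 0 < x \<Longrightarrow> x < y \<Longrightarrow> \<exists>s\<in>S. x < s \<and> s < y"
  unfolding dense_subsemigroup_def by auto

lemma sum_geometric_le:
  fixes c :: real
  assumes "finite H" "0 \<le> c"
  shows "(\<Sum>t\<in>H. c * (1/2)^t) \<le> 2 * c"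
proof -
  have "(\<Sum>t\<in>H. (1/2::real)^t) \<le> (\<Sum>t. (1/2)^t)"
    by (rule sum_le_suminf) (use assms(1) summable_geometric[of "1/2::real"] in auto)
  also have "\<dots> = 2" using suminf_geometric[of "1/2::real"] by simp
  finally have "c * (\<Sum>t\<in>H. (1/2)^t) \<le> c * 2" using assms(2) by (rule mult_left_mono)
  then show ?thesis by (simp add: sum_distrib_left mult.commute)
qed

lemma tendsto_zero_if_geometric_bound:
  fixes f :: "nat \<Rightarrow> real"
  assumes "\<And>n. 0 \<le> f n" "\<And>n. f n \<le> c * (1/2)^n"
  shows "f \<longlonglongrightarrow> 0"
proof (rule tendsto_sandwich[OF _ _ tendsto_const])
  show "(\<lambda>n. c * (1/2)^n) \<longlonglongrightarrow> 0"
    using tendsto_mult_right_zero[OF LIMSEQ_power_zero[of "1/2::real"]] by simp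
qed (use assms in auto)

lemma exists_geometrically_small_tau0:
  assumes ds: "dense_subsemigroup S" and "0 < c"
  obtains f where "f \<in> tau0 S" "\<And>n. f n < c * (1/2)^n"
proof -
  have "\<exists>s\<in>S. 0 < s \<and> s < c * (1/2)^n" for n
  proof -
    have "0 < c * (1/2::real)^n" using \<open>0 < c\<close> by simp
    then show ?thesis
      using dense_subsemigroup_between[OF ds, of "c * (1/2)^n / 2" "c * (1/2)^n"]
        dense_subsemigroup_pos[OF ds] by auto
  qed
  then obtain f where f: "\<And>n. f n \<in> S" "\<And>n. 0 < f n" "\<And>n. f n < c * (1/2)^n"
    by metis
  have "f \<longlonglongrightarrow> 0"
    by (rule tendsto_zero_if_geometric_bound) (use f in \<open>auto intro: less_imp_le\<close>)
  with f show thesis using that unfolding tau0_def by blast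
qed

lemma J_set_near_zero_whole:
  assumes ds: "dense_subsemigroup S"
  shows "J_set_near_zero S S"
  unfolding J_set_near_zero_def
proof (intro allI impI)
  fix F :: "(nat \<Rightarrow> real) set" and \<delta> :: real
  assume F: "finite F \<and> F \<noteq> {} \<and> F \<subseteq> tau0 S" and "0 < \<delta>"
  then obtain a where a: "a \<in> S" "a < \<delta>"
    using dense_subsemigroup_between[OF ds, of "\<delta>/2" \<delta>] by auto
  have "a + sum f {0} \<in> S" if "f \<in> F" for f
  proof -
    have "f 0 \<in> S" using F that unfolding tau0_def by blast
    then show ?thesis using dense_subsemigroup_add_closed[OF ds] a(1) by simp
  qed
  with a dense_subsemigroup_pos[OF ds a(1)]
  show "\<exists>a\<in>S \<inter> {0<..<\<delta>}. \<exists>H. finite H \<and> H \<noteq> {} \<and> (\<forall>f\<in>F. a + sum f H \<in> S)"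
    by (intro bexI[of _ a] exI[of _ "{0}"]) auto
qed

lemma J_set_near_zero_mono: "J_set_near_zero S A \<Longrightarrow> A \<subseteq> B \<Longrightarrow> J_set_near_zero S B"
  unfolding J_set_near_zero_def by (meson subsetD)

text \<open>Test with a single sequence whose partial sums never exceed \<open>\<epsilon>/2\<close>.\<close>
lemma J_set_near_zero_meets_interval:
  assumes ds: "dense_subsemigroup S" and J: "J_set_near_zero S A" and "0 < \<epsilon>"
  shows "A \<inter> {0<..<\<epsilon>} \<noteq> {}"
proof -
  obtain f where f: "f \<in> tau0 S" "\<And>n. f n < \<epsilon>/4 * (1/2)^n"
    using exists_geometrically_small_tau0[OF ds, of "\<epsilon>/4"] \<open>0 < \<epsilon>\<close> by auto
  have "\<exists>a\<in>S \<inter> {0<..<\<epsilon>/2}. \<exists>H. finite H \<and> a + sum f H \<in> A"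
    using J[unfolded J_set_near_zero_def, rule_format, of "{f}" "\<epsilon>/2"] f(1) \<open>0 < \<epsilon>\<close> by (simp, blast)
  then obtain a H where a: "a \<in> S" "a < \<epsilon>/2" and H: "finite H" and aH: "a + sum f H \<in> A"
    by auto
  have f_pos: "0 < f n" for n
    using f(1) dense_subsemigroup_pos[OF ds] unfolding tau0_def by blast
  have "sum f H \<le> (\<Sum>t\<in>H. \<epsilon>/4 * (1/2)^t)"
    using f(2) by (intro sum_mono less_imp_le)
  also have "\<dots> \<le> \<epsilon>/2" using sum_geometric_le[OF H, of "\<epsilon>/4"] \<open>0 < \<epsilon>\<close> by simp
  finally have "a + sum f H < \<epsilon>" using a(2) by simp
  moreover have "0 \<le> sum f H" using f_pos by (simp add: sum_nonneg less_imp_le)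
  then have "0 < a + sum f H" using dense_subsemigroup_pos[OF ds a(1)] by linarith
  ultimately have "a + sum f H \<in> {0<..<\<epsilon>}" by simp
  with aH show ?thesis by blast
qed

section \<open>Partition regularity of J-sets near zero\<close>

lemma exists_block_indices:
  fixes F :: "(nat \<Rightarrow> real) set" and \<epsilon> :: "nat \<Rightarrow> real"
  assumes "finite F" and lim: "\<And>f. f \<in> F \<Longrightarrow> f \<longlonglongrightarrow> 0" and \<epsilon>: "\<And>t. 0 < \<epsilon> t"
  shows "\<exists>idx :: nat \<Rightarrow> nat \<Rightarrow> nat.
    inj_on (\<lambda>(t, i). idx t i) (UNIV \<times> {..<N}) \<and> (\<forall>f\<in>F. \<forall>t i. f (idx t i) < \<epsilon> t)"
proof -
  have "\<forall>t. \<exists>M. \<forall>n\<ge>M. \<forall>f\<in>F. f n < \<epsilon> t"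
  proof
    fix t
    have "eventually (\<lambda>n. \<forall>f\<in>F. f n < \<epsilon> t) sequentially"
      by (rule eventually_ball_finite[OF \<open>finite F\<close>]) (use order_tendstoD(2)[OF lim \<epsilon>] in blast)
    then show "\<exists>M. \<forall>n\<ge>M. \<forall>f\<in>F. f n < \<epsilon> t" by (simp add: eventually_sequentially)
  qed
  then obtain M where M: "\<And>t n f. M t \<le> n \<Longrightarrow> f \<in> F \<Longrightarrow> f n < \<epsilon> t"
    by (metis choice)
  text \<open>Block \<open>t\<close> consists of \<open>N\<close> consecutive indices beyond \<open>M t\<close>, placed after all earlier blocks.\<close>
  define idx where "idx t i = (\<Sum>s\<le>t. M s) + N * t + i" for t i
  have less: "idx t i < idx t' i'" if "t < t'" "i < N" for t t' i i'
  proof -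
    have "(\<Sum>s\<le>t. M s) \<le> (\<Sum>s\<le>t'. M s)" using that(1) by (intro sum_mono2) auto
    moreover have "N * t + N \<le> N * t'" using mult_le_mono2[of "Suc t" t' N] that(1) by simp
    ultimately show ?thesis unfolding idx_def using that(2) by linarith
  qed
  have "inj_on (\<lambda>(t, i). idx t i) (UNIV \<times> {..<N})"
  proof (rule inj_onI, clarsimp)
    fix t i t' i' assume "i < N" "i' < N" and eq: "idx t i = idx t' i'"
    then have "t = t'" using less[of t t' i i'] less[of t' t i' i] by (metis less_irrefl nat_neq_iff)
    with eq show "t = t' \<and> i = i'" unfolding idx_def by simp
  qed
  moreover have "f (idx t i) < \<epsilon> t" if "f \<in> F" for f t i
  proof (rule M[OF _ that])
    have "M t \<le> (\<Sum>s\<le>t. M s)" by (rule member_le_sum) auto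
    then show "M t \<le> idx t i" unfolding idx_def by simp
  qed
  ultimately show ?thesis by blast
qed

lemma sum_blocks_comb_line:
  fixes e :: "nat \<Rightarrow> nat \<Rightarrow> 'a::comm_monoid_add"
  assumes V: "V \<subseteq> {..<N}" and inj: "inj_on (\<lambda>(t, i). idx t i) (H \<times> V)"
  shows "(\<Sum>t\<in>H. \<Sum>i<N. e (comb_line w V x i) (idx t i))
    = (\<Sum>(t, i)\<in>H \<times> ({..<N} - V). e (w i) (idx t i)) + sum (e x) ((\<lambda>(t, i). idx t i) ` (H \<times> V))"
proof -
  have "(\<Sum>i<N. e (comb_line w V x i) (idx t i))
      = (\<Sum>i\<in>{..<N} - V. e (w i) (idx t i)) + (\<Sum>i\<in>V. e x (idx t i))" for t
  proof -
    have "(\<Sum>i<N. e (comb_line w V x i) (idx t i))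
        = (\<Sum>i\<in>{..<N} - V. e (comb_line w V x i) (idx t i)) + (\<Sum>i\<in>V. e (comb_line w V x i) (idx t i))"
      using sum.subset_diff[OF V] by simp
    also have "\<dots> = (\<Sum>i\<in>{..<N} - V. e (w i) (idx t i)) + (\<Sum>i\<in>V. e x (idx t i))"
      unfolding comb_line_def by (intro arg_cong2[where f = "(+)"] sum.cong) auto
    finally show ?thesis .
  qed
  then have "(\<Sum>t\<in>H. \<Sum>i<N. e (comb_line w V x i) (idx t i))
      = (\<Sum>t\<in>H. \<Sum>i\<in>{..<N} - V. e (w i) (idx t i)) + (\<Sum>t\<in>H. \<Sum>i\<in>V. e x (idx t i))"
    by (simp add: sum.distrib)
  also have "\<dots> = (\<Sum>(t, i)\<in>H \<times> ({..<N} - V). e (w i) (idx t i)) + (\<Sum>(t, i)\<in>H \<times> V. e x (idx t i))"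
    by (simp add: sum.cartesian_product)
  also have "(\<Sum>(t, i)\<in>H \<times> V. e x (idx t i)) = sum (e x) ((\<lambda>(t, i). idx t i) ` (H \<times> V))"
    by (subst sum.reindex[OF inj]) (simp add: case_prod_unfold)
  finally show ?thesis .
qed

lemma block_sums_le:
  fixes q :: "nat \<Rightarrow> nat \<Rightarrow> real" and N :: nat
  assumes "0 < N" and "\<And>i. i < N \<Longrightarrow> q i (idx t i) < c * (1/2)^t / N"
  shows "(\<Sum>i<N. q i (idx t i)) \<le> c * (1/2)^t"
proof -
  have "(\<Sum>i<N. q i (idx t i)) \<le> (\<Sum>i<N. c * (1/2)^t / N)"
    using assms by (intro sum_mono less_imp_le) auto
  also have "\<dots> = c * (1/2)^t" using \<open>0 < N\<close> by simp
  finally show ?thesis .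
qed

lemma block_sums_in_tau0:
  fixes N :: nat
  assumes ds: "dense_subsemigroup S" and "0 < N" and q: "\<And>i. i < N \<Longrightarrow> q i \<in> tau0 S"
    and small: "\<And>i t. i < N \<Longrightarrow> q i (idx t i) < c * (1/2)^t / N"
  shows "(\<lambda>t. \<Sum>i<N. q i (idx t i)) \<in> tau0 S"
proof -
  have in_S: "(\<Sum>i<N. q i (idx t i)) \<in> S" for t
    by (rule sum_in_add_closed[OF dense_subsemigroup_add_closed[OF ds]])
      (use q \<open>0 < N\<close> in \<open>auto simp: tau0_def\<close>)
  have "(\<lambda>t. \<Sum>i<N. q i (idx t i)) \<longlonglongrightarrow> 0"
  proof (rule tendsto_zero_if_geometric_bound)
    show "0 \<le> (\<Sum>i<N. q i (idx t i))" for t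
      using dense_subsemigroup_pos[OF ds in_S] less_imp_le by blast
    show "(\<Sum>i<N. q i (idx t i)) \<le> c * (1/2)^t" for t
      using \<open>0 < N\<close> small by (rule block_sums_le)
  qed
  with in_S show ?thesis unfolding tau0_def by blast
qed

lemma exists_block_sums:
  fixes N :: nat
  assumes ds: "dense_subsemigroup S" and F: "finite F" "F \<subseteq> tau0 S" and "0 < N" "0 < c"
  shows "\<exists>idx. inj_on (\<lambda>(t, i). idx t i) (UNIV \<times> {..<N}) \<and>
    (\<forall>q. (\<forall>i<N. q i \<in> F) \<longrightarrow> (\<lambda>t. \<Sum>i<N. q i (idx t i)) \<in> tau0 S \<and>
      (\<forall>t. (\<Sum>i<N. q i (idx t i)) \<le> c * (1/2)^t))"
proof -
  have lim: "f \<longlonglongrightarrow> 0" if "f \<in> F" for f using F(2) that unfolding tau0_def by blast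
  have pos: "0 < c * (1/2)^t / N" for t using \<open>0 < N\<close> \<open>0 < c\<close> by simp
  obtain idx where inj: "inj_on (\<lambda>(t, i). idx t i) (UNIV \<times> {..<N})"
    and small: "\<And>f t i. f \<in> F \<Longrightarrow> f (idx t i) < c * (1/2)^t / N"
    using exists_block_indices[where \<epsilon> = "\<lambda>t. c * (1/2)^t / N" and N = N, OF F(1) lim pos]
    by blast
  have "(\<lambda>t. \<Sum>i<N. q i (idx t i)) \<in> tau0 S \<and> (\<forall>t. (\<Sum>i<N. q i (idx t i)) \<le> c * (1/2)^t)"
    if q: "\<forall>i<N. q i \<in> F" for q
  proof (intro conjI allI)
    show "(\<lambda>t. \<Sum>i<N. q i (idx t i)) \<in> tau0 S"
      by (rule block_sums_in_tau0[where c = c, OF ds \<open>0 < N\<close>]) (use q F(2) small in auto)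
    show "(\<Sum>i<N. q i (idx t i)) \<le> c * (1/2)^t" for t
      by (rule block_sums_le[where c = c, OF \<open>0 < N\<close>]) (use q small in auto)
  qed
  with inj show ?thesis by blast
qed

lemma add_partial_block_sums_in_interval:
  fixes q :: "nat \<Rightarrow> nat \<Rightarrow> real" and N :: nat
  assumes ds: "dense_subsemigroup S" and a: "a \<in> S" "a < \<delta>/2" and "finite H" "R \<subseteq> {..<N}"
    and q_S: "\<And>i t. i < N \<Longrightarrow> q i (idx t i) \<in> S"
    and bound: "\<And>t. (\<Sum>i<N. q i (idx t i)) \<le> \<delta>/4 * (1/2)^t"
  shows "a + (\<Sum>(t, i)\<in>H \<times> R. q i (idx t i)) \<in> S \<inter> {0<..<\<delta>}"
proof -
  have "a + (\<Sum>(t, i)\<in>H \<times> R. q i (idx t i)) \<in> S"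
    by (rule add_sum_in_add_closed[OF dense_subsemigroup_add_closed[OF ds] a(1)])
      (use \<open>finite H\<close> \<open>R \<subseteq> {..<N}\<close> finite_subset q_S in auto)
  moreover have "(\<Sum>(t, i)\<in>H \<times> R. q i (idx t i)) \<le> \<delta>/2"
  proof -
    have "(\<Sum>(t, i)\<in>H \<times> R. q i (idx t i)) = (\<Sum>t\<in>H. \<Sum>i\<in>R. q i (idx t i))"
    by (simp add: sum.cartesian_product)
    also have "\<dots> \<le> (\<Sum>t\<in>H. \<Sum>i<N. q i (idx t i))"
      by (intro sum_mono sum_mono2)
        (use \<open>R \<subseteq> {..<N}\<close> q_S dense_subsemigroup_pos[OF ds] in \<open>auto intro: less_imp_le\<close>)
    also have "\<dots> \<le> (\<Sum>t\<in>H. \<delta>/4 * (1/2)^t)" by (intro sum_mono bound)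
    also have "\<dots> \<le> \<delta>/2"
      using sum_geometric_le[OF \<open>finite H\<close>, of "\<delta>/4"] dense_subsemigroup_pos[OF ds a(1)] a(2) by simp
    finally show ?thesis .
  qed
  ultimately show ?thesis using a(2) dense_subsemigroup_pos[OF ds] by auto
qed

text \<open>Hales--Jewett with the sequences of \<open>F\<close> as alphabet: every word \<open>w\<close> gives a block-sum sequence
  \<open>g w\<close>; testing \<open>C \<union> D\<close> on all of them and colouring \<open>w\<close> by where its sum lands, a monochromatic
  line yields a common \<open>a'\<close> and \<open>H'\<close> for all members of \<open>F\<close>.\<close>
lemma J_set_near_zero_Un_common_witness:
  assumes ds: "dense_subsemigroup S" and J: "J_set_near_zero S (C \<union> D)"
    and F: "finite F" "F \<noteq> {}" "F \<subseteq> tau0 S" and "0 < \<delta>"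
  shows "\<exists>a\<in>S \<inter> {0<..<\<delta>}. \<exists>H. finite H \<and> H \<noteq> {} \<and>
     ((\<forall>f\<in>F. a + sum f H \<in> C) \<or> (\<forall>f\<in>F. a + sum f H \<in> D))"
proof -
  define k where "k = card F"
  have "0 < k" unfolding k_def using F by (simp add: card_gt_0_iff)
  obtain e where e: "bij_betw e {..<k} F"
    unfolding k_def using ex_bij_betw_nat_finite[OF F(1)] atLeast0LessThan by metis
  have e_F: "x < k \<Longrightarrow> e x \<in> F" for x using bij_betw_apply[OF e] by auto
  have F_e: "f \<in> F \<Longrightarrow> \<exists>x<k. f = e x" for f using e unfolding bij_betw_def by auto
  obtain N where N: "\<And>c. \<forall>u\<in>words k N. c u < 2 \<Longrightarrow> has_mono_line k c N"
    using hales_jewett[OF \<open>0 < k\<close>] by blast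
  have "has_mono_line k (\<lambda>_. 0) N" by (rule N) simp
  then have "0 < N" unfolding has_mono_line_def by (metis lessThan_0 not_gr0 subset_empty)
  have "0 < \<delta>/4" using \<open>0 < \<delta>\<close> by simp
  from exists_block_sums[OF ds F(1,3) \<open>0 < N\<close> this] obtain idx
    where idx_inj: "inj_on (\<lambda>(t, i). idx t i) (UNIV \<times> {..<N})"
      and block_tau0: "\<And>q. \<forall>i<N. q i \<in> F \<Longrightarrow> (\<lambda>t. \<Sum>i<N. q i (idx t i)) \<in> tau0 S"
      and block_le: "\<And>q t. \<forall>i<N. q i \<in> F \<Longrightarrow> (\<Sum>i<N. q i (idx t i)) \<le> \<delta>/4 * (1/2)^t"
    by blast
  define g where "g w t = (\<Sum>i<N. e (w i) (idx t i))" for w t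
  have word_F: "\<forall>i<N. e (w i) \<in> F" if "w \<in> words k N" for w
    using e_F words_less that by blast
  have g_tau0: "g w \<in> tau0 S" if "w \<in> words k N" for w
    unfolding g_def by (rule block_tau0[OF word_F[OF that]])
  have "finite (g ` words k N)" "g ` words k N \<noteq> {}" "g ` words k N \<subseteq> tau0 S"
    using finite_words words_nonempty[OF \<open>0 < k\<close>] g_tau0 by auto
  then have "\<exists>a\<in>S \<inter> {0<..<\<delta>/2}. \<exists>H. finite H \<and> H \<noteq> {} \<and> (\<forall>h\<in>g ` words k N. a + sum h H \<in> C \<union> D)"
    using J[unfolded J_set_near_zero_def, rule_format, of "g ` words k N" "\<delta>/2"] \<open>0 < \<delta>\<close> by simp
  then obtain a H where a: "a \<in> S \<inter> {0<..<\<delta>/2}" and H: "finite H" "H \<noteq> {}"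
    and aH: "\<forall>h\<in>g ` words k N. a + sum h H \<in> C \<union> D"
    by blast
  define colour where "colour w = (if a + sum (g w) H \<in> C then 0 else 1::nat)" for w
  have "has_mono_line k colour N" by (rule N) (simp add: colour_def)
  then obtain w V where w: "w \<in> words k N" and V: "V \<noteq> {}" "V \<subseteq> {..<N}"
    and mono: "\<forall>x<k. colour (comb_line w V x) = colour (comb_line w V 0)"
    unfolding has_mono_line_def by blast
  define a' where "a' = a + (\<Sum>(t, i)\<in>H \<times> ({..<N} - V). e (w i) (idx t i))"
  define H' where "H' = (\<lambda>(t, i). idx t i) ` (H \<times> V)"
  have inj_HV: "inj_on (\<lambda>(t, i). idx t i) (H \<times> V)"
    by (rule inj_on_subset[OF idx_inj]) (use V(2) in auto)
  have shift: "a + sum (g (comb_line w V x)) H = a' + sum (e x) H'" for x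
    unfolding g_def a'_def H'_def using sum_blocks_comb_line[OF V(2) inj_HV, of e w x]
    by (simp add: add.assoc)
  have terms_S: "e (w i) (idx t i) \<in> S" if "i < N" for t i
    using word_F[OF w] F(3) that unfolding tau0_def by blast
  have "a' \<in> S \<inter> {0<..<\<delta>}"
    unfolding a'_def
    by (rule add_partial_block_sums_in_interval[where q = "\<lambda>i. e (w i)" and idx = idx,
          OF ds _ _ H(1) _ terms_S block_le[OF word_F[OF w]]]) (use a in auto)
  moreover have "finite H'" "H' \<noteq> {}" unfolding H'_def using H V finite_subset[OF V(2)] by auto
  moreover have "(\<forall>f\<in>F. a' + sum f H' \<in> C) \<or> (\<forall>f\<in>F. a' + sum f H' \<in> D)"
  proof -
    have same_side: "a' + sum (e x) H' \<in> C \<longleftrightarrow> a' + sum (e 0) H' \<in> C" if "x < k" for x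
    proof -
      have "(if a' + sum (e x) H' \<in> C then 0 else 1::nat) = (if a' + sum (e 0) H' \<in> C then 0 else 1)"
        using mono that unfolding colour_def shift by blast
      then show ?thesis by (simp split: if_splits)
    qed
    have in_CD: "a' + sum (e x) H' \<in> C \<union> D" if "x < k" for x
      using aH comb_line_in_words[OF w V(2) that] unfolding shift[symmetric] by blast
    show ?thesis
    proof (cases "a' + sum (e 0) H' \<in> C")
      case True
      then show ?thesis using F_e same_side by blast
    next
      case False
      then show ?thesis using F_e same_side in_CD by blast
    qed
  qed
  ultimately show ?thesis by blast
qed

lemma J_set_near_zero_Un:
  assumes ds: "dense_subsemigroup S" and J: "J_set_near_zero S (C \<union> D)"
  shows "J_set_near_zero S C \<or> J_set_near_zero S D"
proof (rule ccontr)
  assume "\<not> ?thesis"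
  then have nC: "\<not> J_set_near_zero S C" and nD: "\<not> J_set_near_zero S D" by auto
  from nC obtain F1 \<delta>1 where F1: "finite F1" "F1 \<noteq> {}" "F1 \<subseteq> tau0 S" "0 < \<delta>1"
    and no_C: "\<not> (\<exists>a\<in>S \<inter> {0<..<\<delta>1}. \<exists>H. finite H \<and> H \<noteq> {} \<and> (\<forall>f\<in>F1. a + sum f H \<in> C))"
    unfolding J_set_near_zero_def by blast
  from nD obtain F2 \<delta>2 where F2: "finite F2" "F2 \<noteq> {}" "F2 \<subseteq> tau0 S" "0 < \<delta>2"
    and no_D: "\<not> (\<exists>a\<in>S \<inter> {0<..<\<delta>2}. \<exists>H. finite H \<and> H \<noteq> {} \<and> (\<forall>f\<in>F2. a + sum f H \<in> D))"
    unfolding J_set_near_zero_def by blast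
  have "finite (F1 \<union> F2)" "F1 \<union> F2 \<noteq> {}" "F1 \<union> F2 \<subseteq> tau0 S" "0 < min \<delta>1 \<delta>2"
    using F1 F2 by auto
  from J_set_near_zero_Un_common_witness[OF ds J this] obtain a H
    where a: "a \<in> S \<inter> {0<..<min \<delta>1 \<delta>2}" and H: "finite H" "H \<noteq> {}"
      and CD: "(\<forall>f\<in>F1 \<union> F2. a + sum f H \<in> C) \<or> (\<forall>f\<in>F1 \<union> F2. a + sum f H \<in> D)"
    by blast
  have "a \<in> S \<inter> {0<..<\<delta>1}" "a \<in> S \<inter> {0<..<\<delta>2}" using a by auto
  with CD H no_C no_D show False by blast
qed

section \<open>Ultrafilters and the topology of \<open>\<beta>S\<close>\<close>

lemma beta_filter_on: "p \<in> beta S \<Longrightarrow> filter_on S p"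
  unfolding beta_def ultrafilter_on_def by simp

lemma beta_subset: "p \<in> beta S \<Longrightarrow> A \<in> p \<Longrightarrow> A \<subseteq> S"
  using beta_filter_on[of p S] unfolding filter_on_def by auto

lemma beta_whole: "p \<in> beta S \<Longrightarrow> S \<in> p"
  using beta_filter_on[of p S] unfolding filter_on_def by simp

lemma beta_not_empty: "p \<in> beta S \<Longrightarrow> {} \<notin> p"
  using beta_filter_on[of p S] unfolding filter_on_def by simp

lemma beta_Int: "p \<in> beta S \<Longrightarrow> A \<in> p \<Longrightarrow> B \<in> p \<Longrightarrow> A \<inter> B \<in> p"
  using beta_filter_on[of p S] unfolding filter_on_def by simp

lemma beta_mono: "p \<in> beta S \<Longrightarrow> A \<in> p \<Longrightarrow> A \<subseteq> B \<Longrightarrow> B \<subseteq> S \<Longrightarrow> B \<in> p"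
  using beta_filter_on[of p S] unfolding filter_on_def by blast

lemma beta_Int_iff:
  assumes "p \<in> beta S" "A \<subseteq> S" "B \<subseteq> S"
  shows "A \<inter> B \<in> p \<longleftrightarrow> A \<in> p \<and> B \<in> p"
  using beta_Int[OF assms(1)] beta_mono[OF assms(1), of "A \<inter> B"] assms(2,3) by blast

lemma beta_compl_iff:
  assumes "p \<in> beta S" "A \<subseteq> S"
  shows "S - A \<in> p \<longleftrightarrow> A \<notin> p"
proof
  assume "S - A \<in> p"
  then show "A \<notin> p" using beta_Int[OF assms(1), of A "S - A"] beta_not_empty[OF assms(1)] by auto
next
  assume "A \<notin> p"
  then show "S - A \<in> p" using assms unfolding beta_def ultrafilter_on_def by blast
qed

lemma filter_on_Inter:
  assumes "filter_on S K" "finite E" "E \<subseteq> K"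
  shows "S \<inter> \<Inter>E \<in> K"
  using assms(2,3)
proof (induction E rule: finite_induct)
  case empty
  then show ?case using assms(1) unfolding filter_on_def by simp
next
  case (insert X E)
  have "\<forall>A\<in>K. \<forall>B\<in>K. A \<inter> B \<in> K" using assms(1) unfolding filter_on_def by simp
  moreover have "X \<in> K" "S \<inter> \<Inter>E \<in> K" using insert by auto
  ultimately have "X \<inter> (S \<inter> \<Inter>E) \<in> K" by blast
  moreover have "X \<inter> (S \<inter> \<Inter>E) = S \<inter> \<Inter>(insert X E)" by auto
  ultimately show ?case by simp
qed

definition fip :: "'a set \<Rightarrow> 'a set set \<Rightarrow> bool" where
  "fip S G \<longleftrightarrow> (\<forall>E. finite E \<and> E \<subseteq> G \<longrightarrow> S \<inter> \<Inter>E \<noteq> {})"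

lemma filter_on_imp_fip:
  assumes "filter_on S K"
  shows "fip S K"
proof -
  have "{} \<notin> K" using assms unfolding filter_on_def by simp
  then show ?thesis unfolding fip_def using filter_on_Inter[OF assms] by force
qed

lemma fip_Union_chain:
  assumes "C \<noteq> {}" "subset.chain \<A> C" "\<And>G. G \<in> C \<Longrightarrow> fip S G"
  shows "fip S (\<Union>C)"
  unfolding fip_def
proof (intro allI impI)
  fix E assume E: "finite E \<and> E \<subseteq> \<Union>C"
  then obtain G where "G \<in> C" "E \<subseteq> G"
    using finite_subset_Union_chain[of E C \<A>] assms(1,2) by blast
  then show "S \<inter> \<Inter>E \<noteq> {}" using assms(3) E unfolding fip_def by blast
qed

lemma fip_insert:
  assumes "\<And>E. finite E \<Longrightarrow> E \<subseteq> M \<Longrightarrow> S \<inter> X \<inter> \<Inter>E \<noteq> {}"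
  shows "fip S (insert X M)"
  unfolding fip_def
proof (intro allI impI)
  fix E assume E: "finite E \<and> E \<subseteq> insert X M"
  then have "S \<inter> X \<inter> \<Inter>(E - {X}) \<noteq> {}" using assms[of "E - {X}"] by blast
  moreover have "S \<inter> X \<inter> \<Inter>(E - {X}) \<subseteq> S \<inter> \<Inter>E" by blast
  ultimately show "S \<inter> \<Inter>E \<noteq> {}" by blast
qed

lemma maximal_fip_in_beta:
  assumes MS: "M \<subseteq> Pow S" and fipM: "fip S M"
    and max: "\<And>X. X \<subseteq> S \<Longrightarrow> fip S (insert X M) \<Longrightarrow> X \<in> M"
  shows "M \<in> beta S"
proof -
  have fin: "S \<inter> \<Inter>E \<noteq> {}" if "finite E" "E \<subseteq> M" for E using fipM that unfolding fip_def by blast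
  have add: "X \<in> M" if "X \<subseteq> S" "\<And>E. finite E \<Longrightarrow> E \<subseteq> M \<Longrightarrow> S \<inter> X \<inter> \<Inter>E \<noteq> {}" for X
    using max[OF that(1) fip_insert] that(2) by blast
  have "ultrafilter_on S M"
    unfolding ultrafilter_on_def filter_on_def
  proof (intro conjI ballI allI impI)
    show "M \<subseteq> Pow S" by fact
    show "S \<in> M" by (rule add) (use fin in auto)
    show "{} \<notin> M" using fin[of "{{}}"] by auto
  next
    fix A B assume AB: "A \<in> M" "B \<in> M"
    show "A \<inter> B \<in> M"
    proof (rule add)
      show "A \<inter> B \<subseteq> S" using AB MS by blast
      fix E assume "finite E" "E \<subseteq> M"
      then have "S \<inter> \<Inter>(insert A (insert B E)) \<noteq> {}" using AB by (intro fin) auto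
      then show "S \<inter> (A \<inter> B) \<inter> \<Inter>E \<noteq> {}" by auto
    qed
  next
    fix A B assume A: "A \<in> M" and AB: "A \<subseteq> B \<and> B \<subseteq> S"
    show "B \<in> M"
    proof (rule add)
      show "B \<subseteq> S" using AB by blast
      fix E assume "finite E" "E \<subseteq> M"
      then have "S \<inter> \<Inter>(insert A E) \<noteq> {}" using A by (intro fin) auto
      then show "S \<inter> B \<inter> \<Inter>E \<noteq> {}" using AB by auto
    qed
  next
    fix A assume AS: "A \<subseteq> S"
    show "A \<in> M \<or> S - A \<in> M"
    proof (rule ccontr)
      assume "\<not> (A \<in> M \<or> S - A \<in> M)"
      then obtain E1 E2 where E: "finite E1" "E1 \<subseteq> M" "S \<inter> A \<inter> \<Inter>E1 = {}"
          "finite E2" "E2 \<subseteq> M" "S \<inter> (S - A) \<inter> \<Inter>E2 = {}"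
        using add[OF AS] add[of "S - A"] by blast
      then have "S \<inter> \<Inter>(E1 \<union> E2) = {}" by blast
      then show False using fin[of "E1 \<union> E2"] E by blast
    qed
  qed
  then show ?thesis unfolding beta_def by simp
qed

lemma exists_beta_extending_fip:
  assumes FS: "F \<subseteq> Pow S" and "fip S F"
  obtains p where "p \<in> beta S" "F \<subseteq> p"
proof -
  define \<A> where "\<A> = {G. F \<subseteq> G \<and> G \<subseteq> Pow S \<and> fip S G}"
  have "\<exists>M\<in>\<A>. \<forall>X\<in>\<A>. M \<subseteq> X \<longrightarrow> X = M"
  proof (rule subset_Zorn_nonempty)
    show "\<A> \<noteq> {}" using assms unfolding \<A>_def by auto
    fix C assume C: "C \<noteq> {}" "subset.chain \<A> C"
    then have C_A: "G \<in> C \<Longrightarrow> F \<subseteq> G \<and> G \<subseteq> Pow S \<and> fip S G" for G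
      unfolding subset.chain_def \<A>_def by blast
    have "fip S (\<Union>C)" using fip_Union_chain[OF C] C_A by blast
    moreover have "F \<subseteq> \<Union>C" using C(1) C_A by blast
    moreover have "\<Union>C \<subseteq> Pow S" using C_A by blast
    ultimately show "\<Union>C \<in> \<A>" unfolding \<A>_def by blast
  qed
  then obtain M where "M \<in> \<A>" and max: "\<And>X. X \<in> \<A> \<Longrightarrow> M \<subseteq> X \<Longrightarrow> X = M"
    by blast
  then have M: "F \<subseteq> M" "M \<subseteq> Pow S" "fip S M" unfolding \<A>_def by auto
  have "M \<in> beta S"
  proof (rule maximal_fip_in_beta[OF M(2,3)])
    fix X assume "X \<subseteq> S" "fip S (insert X M)"
    then have "insert X M \<in> \<A>" using M unfolding \<A>_def by auto
    then show "X \<in> M" using max[of "insert X M"] by blast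
  qed
  with M(1) show thesis using that by blast
qed

lemma topspace_beta_topology: "topspace (beta_topology S) = beta S"
proof -
  have "p \<in> {q \<in> beta S. S \<in> q}" if "p \<in> beta S" for p using that beta_whole by blast
  then show ?thesis unfolding beta_topology_def topology_generated_by_topspace by blast
qed

lemma openin_beta_basic: "A \<subseteq> S \<Longrightarrow> openin (beta_topology S) {q \<in> beta S. A \<in> q}"
  unfolding beta_topology_def by (rule topology_generated_by_Basis) blast

lemma openin_beta_topology_basic_nbhd:
  assumes "openin (beta_topology S) U" "p \<in> U"
  shows "\<exists>A. A \<subseteq> S \<and> A \<in> p \<and> {q \<in> beta S. A \<in> q} \<subseteq> U"
proof -
  have "p \<in> beta S" using assms openin_subset topspace_beta_topology by blast
  have "generate_topology_on {{p \<in> beta S. A \<in> p} |A. A \<subseteq> S} U"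
    using assms(1) unfolding beta_topology_def by (rule openin_topology_generated_by)
  then show ?thesis using assms(2) \<open>p \<in> beta S\<close>
  proof (induction arbitrary: p)
    case Empty
    then show ?case by simp
  next
    case (Int U1 U2)
    obtain A1 where A1: "A1 \<subseteq> S" "A1 \<in> p" "{q \<in> beta S. A1 \<in> q} \<subseteq> U1" using Int by blast
    obtain A2 where A2: "A2 \<subseteq> S" "A2 \<in> p" "{q \<in> beta S. A2 \<in> q} \<subseteq> U2" using Int by blast
    have "{q \<in> beta S. A1 \<inter> A2 \<in> q} \<subseteq> U1 \<inter> U2"
      using A1 A2 beta_Int_iff[of _ S A1 A2] by blast
    moreover have "A1 \<inter> A2 \<in> p" using beta_Int[OF Int.prems(2) A1(2) A2(2)] .
    ultimately show ?case using A1(1) by blast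
  next
    case (UN \<K>)
    then obtain U where "U \<in> \<K>" "p \<in> U" by blast
    then show ?case using UN.IH[of U p] UN.prems by blast
  next
    case (Basis U)
    then show ?case by blast
  qed
qed

lemma closedin_filter_closure:
  assumes "K \<subseteq> Pow S"
  shows "closedin (beta_topology S) (filter_closure S K)"
proof -
  have "q \<notin> filter_closure S K \<longleftrightarrow> (\<exists>A\<in>K. S - A \<in> q)" if q: "q \<in> beta S" for q
  proof -
    have "(\<exists>A\<in>K. A \<notin> q) \<longleftrightarrow> (\<exists>A\<in>K. S - A \<in> q)" using beta_compl_iff[OF q] assms by blast
    then show ?thesis using q unfolding filter_closure_def by blast
  qed
  then have "beta S - filter_closure S K = (\<Union>A\<in>K. {q \<in> beta S. S - A \<in> q})" by blast
  moreover have "openin (beta_topology S) (\<Union>A\<in>K. {q \<in> beta S. S - A \<in> q})"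
    by (intro openin_Union) (auto intro: openin_beta_basic)
  moreover have "filter_closure S K \<subseteq> beta S" unfolding filter_closure_def by blast
  ultimately show ?thesis unfolding closedin_def topspace_beta_topology by simp
qed

text \<open>An open cover without finite subcover gives, via basic neighbourhoods \<open>A p \<ni> p\<close>,
  a family \<open>S - A p\<close> with the finite intersection property; an ultrafilter \<open>q\<close> containing it
  would lie in no \<open>A p\<close>, in particular not in \<open>A q\<close>.\<close>
lemma compact_space_beta_topology: "compact_space (beta_topology S)"
  unfolding compact_space_alt topspace_beta_topology
proof (intro allI impI)
  fix \<U> assume \<U>: "(\<forall>U\<in>\<U>. openin (beta_topology S) U) \<and> beta S \<subseteq> \<Union>\<U>"
  have "\<forall>p\<in>beta S. \<exists>UA. fst UA \<in> \<U> \<and> snd UA \<subseteq> S \<and> snd UA \<in> p \<and> {q \<in> beta S. snd UA \<in> q} \<subseteq> fst UA"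
  proof
    fix p assume "p \<in> beta S"
    then obtain U where "U \<in> \<U>" "p \<in> U" using \<U> by blast
    moreover obtain B where "B \<subseteq> S \<and> B \<in> p \<and> {q \<in> beta S. B \<in> q} \<subseteq> U"
      using openin_beta_topology_basic_nbhd[of S U p] \<U> \<open>U \<in> \<U>\<close> \<open>p \<in> U\<close> by blast
    ultimately show "\<exists>UA. fst UA \<in> \<U> \<and> snd UA \<subseteq> S \<and> snd UA \<in> p \<and> {q \<in> beta S. snd UA \<in> q} \<subseteq> fst UA"
      by (intro exI[of _ "(U, B)"]) simp
  qed
  from bchoice[OF this] obtain UA where UA: "\<And>p. p \<in> beta S \<Longrightarrow> fst (UA p) \<in> \<U> \<and> snd (UA p) \<subseteq> S \<and>
      snd (UA p) \<in> p \<and> {q \<in> beta S. snd (UA p) \<in> q} \<subseteq> fst (UA p)"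
    by blast
  define U where "U p = fst (UA p)" for p
  define A where "A p = snd (UA p)" for p
  have U: "U p \<in> \<U>" "A p \<subseteq> S" "A p \<in> p" "{q \<in> beta S. A p \<in> q} \<subseteq> U p" if "p \<in> beta S" for p
    using UA[OF that] unfolding U_def A_def by auto
  show "\<exists>\<F>. finite \<F> \<and> \<F> \<subseteq> \<U> \<and> beta S \<subseteq> \<Union>\<F>"
  proof (rule ccontr)
    assume no_subcover: "\<nexists>\<F>. finite \<F> \<and> \<F> \<subseteq> \<U> \<and> beta S \<subseteq> \<Union>\<F>"
    have "fip S ((\<lambda>p. S - A p) ` beta S)"
      unfolding fip_def
    proof (intro allI impI)
      fix E assume E: "finite E \<and> E \<subseteq> (\<lambda>p. S - A p) ` beta S"
      then obtain P where P: "P \<subseteq> beta S" "finite P" "E = (\<lambda>p. S - A p) ` P"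
        by (meson finite_subset_image)
      have "finite (U ` P)" "U ` P \<subseteq> \<U>" using P U(1) by auto
      then have "\<not> beta S \<subseteq> \<Union>(U ` P)" using no_subcover by blast
      then obtain q where q: "q \<in> beta S" "q \<notin> \<Union>(U ` P)" by blast
      have "A p \<notin> q" if "p \<in> P" for p
        using that P(1) q U(4)[of p] by blast
      then have "E \<subseteq> q"
        unfolding P(3) using beta_compl_iff[OF q(1)] U(2) P(1) by blast
      then have "S \<inter> \<Inter>E \<in> q"
        using filter_on_Inter[OF beta_filter_on[OF q(1)]] E by blast
      then show "S \<inter> \<Inter>E \<noteq> {}" using beta_not_empty[OF q(1)] by auto
    qed
    moreover have "(\<lambda>p. S - A p) ` beta S \<subseteq> Pow S" by blast
    ultimately obtain q where q: "q \<in> beta S" "(\<lambda>p. S - A p) ` beta S \<subseteq> q"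
      using exists_beta_extending_fip by blast
    then have "S - A q \<in> q" by blast
    then show False using U(2,3)[OF q(1)] beta_compl_iff[OF q(1)] by blast
  qed
qed

lemma compactin_filter_closure: "K \<subseteq> Pow S \<Longrightarrow> compactin (beta_topology S) (filter_closure S K)"
  by (rule closedin_compact_space[OF compact_space_beta_topology closedin_filter_closure])

text \<open>\<open>{y \<in> S. x + y \<in> A}\<close> is \<open>-x + A\<close> in the usual notation, and \<open>T\<close> below is \<open>A - q\<close>, so that
  \<open>A \<in> p + q \<longleftrightarrow> A - q \<in> p\<close>; the ultrafilter axioms for \<open>p + q\<close> follow because
  \<open>A \<mapsto> A - q\<close> preserves intersections and complements.\<close>
lemma beta_plus_in_beta:
  fixes S :: "'a::plus set"
  assumes add: "\<forall>x\<in>S. \<forall>y\<in>S. x + y \<in> S" and p: "p \<in> beta S" and q: "q \<in> beta S"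
  shows "beta_plus S p q \<in> beta S"
proof -
  define T where "T A = {x \<in> S. {y \<in> S. x + y \<in> A} \<in> q}" for A
  have plus_eq: "beta_plus S p q = {A. A \<subseteq> S \<and> T A \<in> p}"
    unfolding beta_plus_def T_def by simp
  have T_sub: "T A \<subseteq> S" for A unfolding T_def by blast
  have T_whole: "T S = S"
  proof -
    have "{y \<in> S. x + y \<in> S} = S" if "x \<in> S" for x using add that by blast
    then show ?thesis unfolding T_def using beta_whole[OF q] by auto
  qed
  have T_empty: "T {} = {}" unfolding T_def using beta_not_empty[OF q] by simp
  have T_Int: "T (A \<inter> B) = T A \<inter> T B" for A B
  proof -
    have "{y \<in> S. x + y \<in> A \<inter> B} = {y \<in> S. x + y \<in> A} \<inter> {y \<in> S. x + y \<in> B}" for x by blast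
    then show ?thesis unfolding T_def using beta_Int_iff[OF q] by auto
  qed
  have T_mono: "T A \<subseteq> T B" if "A \<subseteq> B" for A B
  proof -
    have "{y \<in> S. x + y \<in> A} \<subseteq> {y \<in> S. x + y \<in> B}" for x using that by blast
    then show ?thesis unfolding T_def using beta_mono[OF q] by blast
  qed
  have T_compl: "T (S - A) = S - T A" for A
  proof -
    have "{y \<in> S. x + y \<in> S - A} = S - {y \<in> S. x + y \<in> A}" if "x \<in> S" for x using add that by blast
    then show ?thesis unfolding T_def using beta_compl_iff[OF q] by auto
  qed
  have "ultrafilter_on S {A. A \<subseteq> S \<and> T A \<in> p}"
    unfolding ultrafilter_on_def filter_on_def
  proof (intro conjI ballI allI impI)
    show "S \<in> {A. A \<subseteq> S \<and> T A \<in> p}" using T_whole beta_whole[OF p] by simp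
    show "{} \<notin> {A. A \<subseteq> S \<and> T A \<in> p}" using T_empty beta_not_empty[OF p] by simp
  next
    fix A B assume "A \<in> {A. A \<subseteq> S \<and> T A \<in> p}" "B \<in> {A. A \<subseteq> S \<and> T A \<in> p}"
    then show "A \<inter> B \<in> {A. A \<subseteq> S \<and> T A \<in> p}" using T_Int beta_Int[OF p] by auto
  next
    fix A B assume "A \<in> {A. A \<subseteq> S \<and> T A \<in> p}" and AB: "A \<subseteq> B \<and> B \<subseteq> S"
    then have "T B \<in> p" using beta_mono[OF p _ T_mono T_sub] by blast
    then show "B \<in> {A. A \<subseteq> S \<and> T A \<in> p}" using AB by blast
  next
    fix A assume "A \<subseteq> S"
    then show "A \<in> {A. A \<subseteq> S \<and> T A \<in> p} \<or> S - A \<in> {A. A \<subseteq> S \<and> T A \<in> p}"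
      using T_compl[of A] beta_compl_iff[OF p T_sub] by auto
  qed blast
  then show ?thesis unfolding beta_def plus_eq by simp
qed

section \<open>The closed subsemigroup \<open>J\<^sub>0(S)\<close>\<close>

lemma beta_plus_in_J0:
  assumes ds: "dense_subsemigroup S" and p: "p \<in> J0 S" and q: "q \<in> J0 S"
  shows "beta_plus S p q \<in> J0 S"
proof -
  have pb: "p \<in> beta S" and p0: "\<And>\<epsilon>. 0 < \<epsilon> \<Longrightarrow> S \<inter> {0<..<\<epsilon>} \<in> p"
    using p unfolding J0_def Oplus_def by auto
  have qb: "q \<in> beta S" and q0: "\<And>\<epsilon>. 0 < \<epsilon> \<Longrightarrow> S \<inter> {0<..<\<epsilon>} \<in> q"
    and qJ: "\<And>A. A \<in> q \<Longrightarrow> J_set_near_zero S A"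
    using q unfolding J0_def Oplus_def by auto
  have add: "\<forall>x\<in>S. \<forall>y\<in>S. x + y \<in> S" by (rule dense_subsemigroup_add_closed[OF ds])
  have "S \<inter> {0<..<\<epsilon>} \<in> beta_plus S p q" if "0 < \<epsilon>" for \<epsilon>
  proof -
    have "{y \<in> S. x + y \<in> S \<inter> {0<..<\<epsilon>}} \<in> q" if x: "x \<in> S \<inter> {0<..<\<epsilon>/2}" for x
    proof (rule beta_mono[OF qb q0])
      show "S \<inter> {0<..<\<epsilon>/2} \<subseteq> {y \<in> S. x + y \<in> S \<inter> {0<..<\<epsilon>}}"
        using x add dense_subsemigroup_pos[OF ds] by auto
    qed (use \<open>0 < \<epsilon>\<close> in auto)
    then have "{x \<in> S. {y \<in> S. x + y \<in> S \<inter> {0<..<\<epsilon>}} \<in> q} \<in> p"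
      by (intro beta_mono[OF pb p0[of "\<epsilon>/2"]]) (use \<open>0 < \<epsilon>\<close> in auto)
    then show ?thesis unfolding beta_plus_def by simp
  qed
  moreover have "J_set_near_zero S A" if A: "A \<in> beta_plus S p q" for A
    unfolding J_set_near_zero_def
  proof (intro allI impI)
    fix F :: "(nat \<Rightarrow> real) set" and \<delta> :: real
    assume F: "finite F \<and> F \<noteq> {} \<and> F \<subseteq> tau0 S" and "0 < \<delta>"
    have "{x \<in> S. {y \<in> S. x + y \<in> A} \<in> q} \<in> p" using A unfolding beta_plus_def by simp
    then have "{x \<in> S. {y \<in> S. x + y \<in> A} \<in> q} \<inter> (S \<inter> {0<..<\<delta>/2}) \<in> p"
      using p0[of "\<delta>/2"] \<open>0 < \<delta>\<close> beta_Int[OF pb] by simp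
    then have "{x \<in> S. {y \<in> S. x + y \<in> A} \<in> q} \<inter> (S \<inter> {0<..<\<delta>/2}) \<noteq> {}"
      using beta_not_empty[OF pb] by metis
    then obtain x where x: "x \<in> S" "x < \<delta>/2" "{y \<in> S. x + y \<in> A} \<in> q"
      by auto
    have "\<exists>a\<in>S \<inter> {0<..<\<delta>/2}. \<exists>H. finite H \<and> H \<noteq> {} \<and> (\<forall>f\<in>F. a + sum f H \<in> {y \<in> S. x + y \<in> A})"
      using qJ[OF x(3), unfolded J_set_near_zero_def, rule_format, of F "\<delta>/2"] F \<open>0 < \<delta>\<close> by simp
    then obtain a H where a: "a \<in> S \<inter> {0<..<\<delta>/2}" and H: "finite H" "H \<noteq> {}"
      and aH: "\<forall>f\<in>F. a + sum f H \<in> {y \<in> S. x + y \<in> A}"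
      by blast
    have "x + a \<in> S \<inter> {0<..<\<delta>}" using a x add dense_subsemigroup_pos[OF ds x(1)] by auto
    moreover have "\<forall>f\<in>F. (x + a) + sum f H \<in> A" using aH by (simp add: add.assoc)
    ultimately show "\<exists>a\<in>S \<inter> {0<..<\<delta>}. \<exists>H. finite H \<and> H \<noteq> {} \<and> (\<forall>f\<in>F. a + sum f H \<in> A)"
      using H by blast
  qed
  ultimately show ?thesis
    using beta_plus_in_beta[OF add pb qb] unfolding J0_def Oplus_def by blast
qed

lemma filter_on_J_set_near_zero_dual:
  assumes ds: "dense_subsemigroup S"
  shows "filter_on S {A. A \<subseteq> S \<and> \<not> J_set_near_zero S (S - A)}" (is "filter_on S ?K")
proof -
  have "\<not> J_set_near_zero S {}"
  proof
    assume "J_set_near_zero S {}"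
    then have "{} \<inter> {0<..<1::real} \<noteq> {}" by (rule J_set_near_zero_meets_interval[OF ds]) simp
    then show False by simp
  qed
  then have whole: "S \<in> ?K" by simp
  have empty: "{} \<notin> ?K" using J_set_near_zero_whole[OF ds] by simp
  have inter: "\<forall>A\<in>?K. \<forall>B\<in>?K. A \<inter> B \<in> ?K"
  proof (intro ballI)
    fix A B assume "A \<in> ?K" "B \<in> ?K"
    moreover have "S - A \<inter> B = (S - A) \<union> (S - B)" by blast
    ultimately show "A \<inter> B \<in> ?K" using J_set_near_zero_Un[OF ds, of "S - A" "S - B"] by auto
  qed
  have upward: "\<forall>A\<in>?K. \<forall>B. A \<subseteq> B \<and> B \<subseteq> S \<longrightarrow> B \<in> ?K"
  proof (intro ballI allI impI)
    fix A B assume "A \<in> ?K" "A \<subseteq> B \<and> B \<subseteq> S"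
    moreover have "S - B \<subseteq> S - A" using \<open>A \<subseteq> B \<and> B \<subseteq> S\<close> by blast
    ultimately show "B \<in> ?K" using J_set_near_zero_mono[of S "S - B" "S - A"] by blast
  qed
  have "?K \<subseteq> Pow S" by blast
  with whole empty inter upward show ?thesis unfolding filter_on_def by (intro conjI)
qed

lemma dual_family_subset_beta_iff:
  assumes "p \<in> beta S"
  shows "{A. A \<subseteq> S \<and> \<not> P (S - A)} \<subseteq> p \<longleftrightarrow> (\<forall>A\<in>p. P A)"
proof
  assume dual: "{A. A \<subseteq> S \<and> \<not> P (S - A)} \<subseteq> p"
  show "\<forall>A\<in>p. P A"
  proof (intro ballI, rule ccontr)
    fix A assume A: "A \<in> p" "\<not> P A"
    have "A \<subseteq> S" using beta_subset[OF assms A(1)] .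
    then have "S - A \<in> p" using dual A(2) double_diff[of A S S] by auto
    then show False using beta_compl_iff[OF assms \<open>A \<subseteq> S\<close>] A(1) by blast
  qed
next
  assume P: "\<forall>A\<in>p. P A"
  show "{A. A \<subseteq> S \<and> \<not> P (S - A)} \<subseteq> p"
  proof (intro subsetI, elim CollectE conjE)
    fix A assume "A \<subseteq> S" "\<not> P (S - A)"
    then show "A \<in> p" using P beta_compl_iff[OF assms \<open>A \<subseteq> S\<close>] by blast
  qed
qed

lemma J0_eq_filter_closure:
  assumes ds: "dense_subsemigroup S"
  shows "J0 S = filter_closure S {A. A \<subseteq> S \<and> \<not> J_set_near_zero S (S - A)}"
proof -
  have near_zero: "S \<inter> {0<..<\<epsilon>} \<in> p"
    if p: "p \<in> beta S" and J: "\<forall>A\<in>p. J_set_near_zero S A" and "0 < \<epsilon>" for p \<epsilon>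
  proof (rule ccontr)
    assume "S \<inter> {0<..<\<epsilon>} \<notin> p"
    then have "S - S \<inter> {0<..<\<epsilon>} \<in> p" using beta_compl_iff[OF p] by blast
    then have "(S - S \<inter> {0<..<\<epsilon>}) \<inter> {0<..<\<epsilon>} \<noteq> {}"
      using J J_set_near_zero_meets_interval[OF ds _ \<open>0 < \<epsilon>\<close>] by blast
    then show False by blast
  qed
  show ?thesis
  proof (intro set_eqI iffI)
    fix p assume "p \<in> J0 S"
    then have "p \<in> beta S" "\<forall>A\<in>p. J_set_near_zero S A" unfolding J0_def Oplus_def by auto
    then show "p \<in> filter_closure S {A. A \<subseteq> S \<and> \<not> J_set_near_zero S (S - A)}"
      unfolding filter_closure_def using dual_family_subset_beta_iff by blast
  next
    fix p assume "p \<in> filter_closure S {A. A \<subseteq> S \<and> \<not> J_set_near_zero S (S - A)}"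
    then have "p \<in> beta S" "\<forall>A\<in>p. J_set_near_zero S A"
      unfolding filter_closure_def using dual_family_subset_beta_iff by blast+
    then show "p \<in> J0 S" unfolding J0_def Oplus_def using near_zero by blast
  qed
qed

theorem lemma4p6:
  fixes S :: "real set"
  assumes "dense_subsemigroup S"
  defines "K \<equiv> {A. A \<subseteq> S \<and> \<not> J_set_near_zero S (S - A)}"
  shows "filter_on S K
    \<and> J0 S = filter_closure S K
    \<and> J0 S \<noteq> {}
    \<and> (\<forall>p\<in>J0 S. \<forall>q\<in>J0 S. beta_plus S p q \<in> J0 S)
    \<and> compactin (beta_topology S) (J0 S)"
proof (intro conjI)
  show filter: "filter_on S K" unfolding K_def by (rule filter_on_J_set_near_zero_dual[OF assms(1)])
  show closure: "J0 S = filter_closure S K" unfolding K_def by (rule J0_eq_filter_closure[OF assms(1)])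
  have "K \<subseteq> Pow S" unfolding K_def by blast
  then obtain p where "p \<in> beta S" "K \<subseteq> p"
    by (rule exists_beta_extending_fip[OF _ filter_on_imp_fip[OF filter]])
  then show "J0 S \<noteq> {}" unfolding closure filter_closure_def by blast
  show "\<forall>p\<in>J0 S. \<forall>q\<in>J0 S. beta_plus S p q \<in> J0 S" using beta_plus_in_J0[OF assms(1)] by blast
  show "compactin (beta_topology S) (J0 S)"
    unfolding closure using compactin_filter_closure \<open>K \<subseteq> Pow S\<close> by blast
qed

end
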